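(* Let $G$ be a tricyclic graph with at least one pendant vertex whose base $\widetilde G$ consists of two distinct vertices $u,v$ joined by three internally vertex-disjoint paths, together with a cycle $C$ passing through $u$ that shares only the vertex $u$ with these three paths. Then $G\notin\mathscr{G}_{a,b}$ for all integers $a,b$.
   Context: All graphs are simple and connected; $d_G(v)$ is the degree of $v$, $N_G(v)$ its neighbourhood. A tricyclic graph is a connected graph with $|E_G|=|V_G|+2$. For integers $a,b$, $\mathscr{G}_{a,b}$ is the set of connected graphs $G$ such that for every $v\in V_G$, $\sum_{u\in N_G(v)}d_G(u)=a\,d_G(v)+b-d_G(v)^2$. A pendant vertex is a vertex of degree $1$. The base $\widetilde{G}$ of $G$ is the subgraph obtained from $G$ by repeatedly deleting pendant vertices until none remain. *)

theory Defs
  imports Main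
begin

definition simple_graph :: "'a set \<Rightarrow> 'a set set \<Rightarrow> bool" where
  "simple_graph V E \<longleftrightarrow> finite V \<and> (\<forall>e\<in>E. card e = 2 \<and> e \<subseteq> V)"

definition nbhd :: "'a set set \<Rightarrow> 'a \<Rightarrow> 'a set" where
  "nbhd E v = {u. {u, v} \<in> E}"

definition deg :: "'a set set \<Rightarrow> 'a \<Rightarrow> nat" where
  "deg E v = card (nbhd E v)"

definition connected_graph :: "'a set \<Rightarrow> 'a set set \<Rightarrow> bool" where
  "connected_graph V E \<longleftrightarrow> V \<noteq> {} \<and>
     (\<forall>x\<in>V. \<forall>y\<in>V. (x, y) \<in> {(p, q). {p, q} \<in> E}\<^sup>*)"

definition tricyclic :: "'a set \<Rightarrow> 'a set set \<Rightarrow> bool" where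
  "tricyclic V E \<longleftrightarrow> simple_graph V E \<and> connected_graph V E \<and> card E = card V + 2"

definition in_Gab :: "'a set \<Rightarrow> 'a set set \<Rightarrow> int \<Rightarrow> int \<Rightarrow> bool" where
  "in_Gab V E a b \<longleftrightarrow> simple_graph V E \<and> connected_graph V E \<and>
     (\<forall>v\<in>V. (\<Sum>u\<in>nbhd E v. int (deg E u)) = a * int (deg E v) + b - int (deg E v) ^ 2)"

definition pendant :: "'a set \<Rightarrow> 'a set set \<Rightarrow> 'a \<Rightarrow> bool" where
  "pendant V E x \<longleftrightarrow> x \<in> V \<and> deg E x = 1"

inductive prune_step :: "'a set \<times> 'a set set \<Rightarrow> 'a set \<times> 'a set set \<Rightarrow> bool" where
  "pendant V E x \<Longrightarrow> prune_step (V, E) (V - {x}, {e \<in> E. x \<notin> e})"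

definition is_base :: "'a set \<times> 'a set set \<Rightarrow> 'a set \<times> 'a set set \<Rightarrow> bool" where
  "is_base G H \<longleftrightarrow> prune_step\<^sup>*\<^sup>* G H \<and> (\<forall>x. \<not> pendant (fst H) (snd H) x)"

fun walk_edges :: "'a list \<Rightarrow> 'a set set" where
  "walk_edges (x # y # xs) = insert {x, y} (walk_edges (y # xs))"
| "walk_edges _ = {}"

definition path_list :: "'a \<Rightarrow> 'a \<Rightarrow> 'a list \<Rightarrow> bool" where
  "path_list u v p \<longleftrightarrow> distinct p \<and> length p \<ge> 2 \<and> hd p = u \<and> last p = v"

text \<open>c is a cycle (vertex sequence c_1..c_k, k \<ge> 3, closed by edge c_k c_1) starting at u.\<close>
definition cycle_list :: "'a \<Rightarrow> 'a list \<Rightarrow> bool" where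
  "cycle_list u c \<longleftrightarrow> distinct c \<and> length c \<ge> 3 \<and> hd c = u"

definition cycle_edges :: "'a list \<Rightarrow> 'a set set" where
  "cycle_edges c = insert {last c, hd c} (walk_edges c)"

definition theta_with_cycle_at_u :: "'a set \<Rightarrow> 'a set set \<Rightarrow> bool" where
  "theta_with_cycle_at_u W F \<longleftrightarrow>
    (\<exists>u v p1 p2 p3 c. u \<noteq> v \<and>
       path_list u v p1 \<and> path_list u v p2 \<and> path_list u v p3 \<and>
       p1 \<noteq> p2 \<and> p1 \<noteq> p3 \<and> p2 \<noteq> p3 \<and>
       set p1 \<inter> set p2 = {u, v} \<and> set p1 \<inter> set p3 = {u, v} \<and> set p2 \<inter> set p3 = {u, v} \<and>
       cycle_list u c \<and> set c \<inter> (set p1 \<union> set p2 \<union> set p3) = {u} \<and>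
       W = set p1 \<union> set p2 \<union> set p3 \<union> set c \<and>
       F = walk_edges p1 \<union> walk_edges p2 \<union> walk_edges p3 \<union> cycle_edges c)"

end

(* In a graph of G_{a,b} every neighbour of a pendant vertex has degree K = a + b - 1.  As soon as
   there are three non-pendant vertices, the degree equations at a non-pendant vertex and at its
   non-pendant neighbours show that every non-pendant vertex has two non-pendant neighbours; so the
   pendant vertices are exactly the vertices outside the base, and every base vertex either keeps
   its base degree or has degree K.  Writing t = -b, the degree equation of a base vertex then
   becomes a linear relation between the degrees of its base neighbours.  Propagated from u along
   the cycle in either direction, these relations leave two possibilities: t = 2 with u and both
   its cycle neighbours of degree K, which violates the equation at u; or a triangle with K = 6,
   t = 1, where the equation at u forces the three u-v paths to have length 2, and then the
   equation at v fails. *)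

theory Submission
  imports Defs
begin

section \<open>Simple graphs and pruning\<close>

lemma simple_graph_edgeD:
  assumes "simple_graph V E" "{p, q} \<in> E"
  shows "p \<in> V" "q \<in> V" "p \<noteq> q"
proof -
  have "card {p, q} = 2" "{p, q} \<subseteq> V" using assms by (auto simp: simple_graph_def)
  then show "p \<in> V" "q \<in> V" "p \<noteq> q" by (auto simp: card_2_iff doubleton_eq_iff)
qed

lemma mem_nbhd_iff: "q \<in> nbhd E p \<longleftrightarrow> {p, q} \<in> E"
  by (simp add: nbhd_def insert_commute)

lemma nbhd_commute: "q \<in> nbhd E p \<longleftrightarrow> p \<in> nbhd E q"
  by (simp add: nbhd_def insert_commute)

lemma nbhd_mono: "F \<subseteq> E \<Longrightarrow> nbhd F p \<subseteq> nbhd E p"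
  by (auto simp: nbhd_def)

lemma nbhd_subset: "simple_graph V E \<Longrightarrow> nbhd E p \<subseteq> V"
  by (auto simp: mem_nbhd_iff dest: simple_graph_edgeD(2))

lemma finite_nbhd: "simple_graph V E \<Longrightarrow> finite (nbhd E p)"
  by (meson finite_subset nbhd_subset simple_graph_def)

lemma deg_pos_if_nbhd: "simple_graph V E \<Longrightarrow> q \<in> nbhd E p \<Longrightarrow> 0 < deg E q"
  unfolding deg_def by (metis card_gt_0_iff empty_iff finite_nbhd nbhd_commute)

lemma nbhd_eq_singleton_if_deg_1: "deg E p = 1 \<Longrightarrow> q \<in> nbhd E p \<Longrightarrow> nbhd E p = {q}"
  unfolding deg_def by (auto simp: card_1_singleton_iff)

lemma connected_graph_closed_subset:
  assumes "connected_graph V E" "x \<in> S" "x \<in> V" "\<And>p. p \<in> S \<Longrightarrow> nbhd E p \<subseteq> S"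
  shows "V \<subseteq> S"
proof
  fix y assume "y \<in> V"
  then have "(x, y) \<in> {(p, q). {p, q} \<in> E}\<^sup>*"
    using assms(1,3) by (auto simp: connected_graph_def)
  then show "y \<in> S"
  proof (induction rule: rtrancl_induct)
    case (step y z)
    then show ?case using assms(4) mem_nbhd_iff by fastforce
  qed (use assms(2) in simp)
qed

lemma non_pendant_in_core:
  assumes "simple_graph V E" "connected_graph V E" "C \<subseteq> V" "C \<noteq> {}"
    and "\<forall>y\<in>C. \<forall>q\<in>nbhd E y - C. pendant V E q"
    and "w \<in> V" "\<not> pendant V E w"
  shows "w \<in> C"
proof -
  let ?S = "C \<union> (\<Union>y\<in>C. nbhd E y)"
  obtain x where "x \<in> C" using assms(4) by blast
  have "nbhd E p \<subseteq> ?S" if p: "p \<in> ?S" for p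
  proof (cases "p \<in> C")
    case False
    then obtain y where y: "y \<in> C" "p \<in> nbhd E y" using p by auto
    then have "deg E p = 1" using assms(5) False by (simp add: pendant_def)
    then have "nbhd E p = {y}"
      using y(2) nbhd_eq_singleton_if_deg_1 nbhd_commute by metis
    then show ?thesis using y(1) by auto
  next
    case True
    then show ?thesis by auto
  qed
  moreover have "x \<in> ?S" "x \<in> V" using \<open>x \<in> C\<close> assms(3) by auto
  ultimately have "V \<subseteq> ?S"
    using connected_graph_closed_subset[OF assms(2)] by metis
  then obtain y where "w \<in> C \<or> (y \<in> C \<and> w \<in> nbhd E y)" using assms(6) by blast
  then show ?thesis using assms(5,7) by blast
qed

lemma prune_steps_induced:
  assumes "prune_step\<^sup>*\<^sup>* (V, E) H" "simple_graph V E"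
  shows "fst H \<subseteq> V \<and> snd H = {e \<in> E. e \<subseteq> fst H}"
  using assms(1)
proof (induction rule: rtranclp_induct)
  case base
  then show ?case using assms(2) by (auto simp: simple_graph_def)
next
  case (step H H')
  from step(2,3) show ?case by cases auto
qed

lemma prune_steps_keep:
  assumes "prune_step\<^sup>*\<^sup>* (V, E) H" "simple_graph V E" "X \<subseteq> V"
    and "\<And>x. x \<in> X \<Longrightarrow> 2 \<le> card (nbhd E x \<inter> X)"
  shows "X \<subseteq> fst H"
  using assms(1)
proof (induction rule: rtranclp_induct)
  case base
  then show ?case using assms(3) by simp
next
  case (step H H')
  from step(2) show ?case
  proof cases
    case (1 V' E' x)
    have E': "E' = {e \<in> E. e \<subseteq> V'}"
      using prune_steps_induced[OF step(1) assms(2)] 1 by simp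
    have "x \<notin> X"
    proof
      assume "x \<in> X"
      then have "nbhd E x \<inter> X \<subseteq> nbhd E' x"
        using step(3) 1 E' by (auto simp: nbhd_def)
      moreover have "finite (nbhd E' x)"
        using finite_nbhd[OF assms(2), of x] E' by (auto simp: nbhd_def elim: finite_subset[rotated])
      ultimately have "card (nbhd E x \<inter> X) \<le> 1"
        using 1 card_mono by (fastforce simp: pendant_def deg_def)
      with assms(4)[OF \<open>x \<in> X\<close>] show False by simp
    qed
    then show ?thesis using step(3) 1 by auto
  qed
qed

section \<open>Walks and paths\<close>

lemma distinct_nth_neq:
  "distinct xs \<Longrightarrow> i < length xs \<Longrightarrow> j < length xs \<Longrightarrow> i \<noteq> j \<Longrightarrow> xs ! i \<noteq> xs ! j"
  by (simp add: nth_eq_iff_index_eq)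

lemma walk_edges_conv: "walk_edges xs = {{xs ! i, xs ! Suc i} | i. Suc i < length xs}"
proof (induction xs rule: walk_edges.induct)
  case (1 x y xs)
  have "{{(x # y # xs) ! i, (x # y # xs) ! Suc i} | i. Suc i < length (x # y # xs)}
      = insert {x, y} {{(y # xs) ! i, (y # xs) ! Suc i} | i. Suc i < length (y # xs)}"
    (is "?L = ?R")
  proof
    show "?L \<subseteq> ?R"
      by (clarify, case_tac i) auto
    show "?R \<subseteq> ?L"
    proof
      fix e assume "e \<in> ?R"
      then show "e \<in> ?L"
        by (auto intro: exI[of _ 0]) (metis Suc_less_eq length_Cons nth_Cons_Suc)
    qed
  qed
  then show ?case using 1 by simp
qed auto

lemma walk_edges_subset_set: "e \<in> walk_edges xs \<Longrightarrow> e \<subseteq> set xs"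
  unfolding walk_edges_conv by auto

lemma in_walk_edges_iff:
  assumes "distinct xs" "i < length xs"
  shows "{q, xs ! i} \<in> walk_edges xs \<longleftrightarrow>
    (0 < i \<and> q = xs ! (i - 1)) \<or> (Suc i < length xs \<and> q = xs ! Suc i)"
proof
  assume "{q, xs ! i} \<in> walk_edges xs"
  then obtain j where j: "{q, xs ! i} = {xs ! j, xs ! Suc j}" "Suc j < length xs"
    unfolding walk_edges_conv by blast
  then have "(q = xs ! j \<and> i = Suc j) \<or> (q = xs ! Suc j \<and> i = j)"
    using assms nth_eq_iff_index_eq by (fastforce simp: doubleton_eq_iff)
  then show "(0 < i \<and> q = xs ! (i - 1)) \<or> (Suc i < length xs \<and> q = xs ! Suc i)"
    using j(2) by auto
next
  assume "(0 < i \<and> q = xs ! (i - 1)) \<or> (Suc i < length xs \<and> q = xs ! Suc i)"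
  then show "{q, xs ! i} \<in> walk_edges xs"
  proof
    assume "0 < i \<and> q = xs ! (i - 1)"
    then show ?thesis
      unfolding walk_edges_conv using assms(2) by (auto intro!: exI[of _ "i - 1"])
  next
    assume "Suc i < length xs \<and> q = xs ! Suc i"
    then show ?thesis
      unfolding walk_edges_conv by (auto intro!: exI[of _ i] simp: insert_commute)
  qed
qed

lemma walk_edges_Cons: "xs \<noteq> [] \<Longrightarrow> walk_edges (x # xs) = insert {x, hd xs} (walk_edges xs)"
  by (cases xs) auto

lemma walk_edges_snoc:
  "xs \<noteq> [] \<Longrightarrow> walk_edges (xs @ [y]) = insert {last xs, y} (walk_edges xs)"
  by (induction xs rule: walk_edges.induct) auto

lemma walk_edges_rev: "walk_edges (rev xs) = walk_edges xs"
proof (induction xs)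
  case (Cons x xs)
  then show ?case
    by (cases "xs = []") (auto simp: walk_edges_snoc walk_edges_Cons last_rev insert_commute)
qed simp

lemma walk_edges_cover: "w \<in> set xs \<Longrightarrow> 2 \<le> length xs \<Longrightarrow> \<exists>q. {q, w} \<in> walk_edges xs"
proof (induction xs rule: walk_edges.induct)
  case (1 x y xs)
  show ?case
  proof (cases "w = x \<or> w = y")
    case False
    then have "w \<in> set (y # xs)" "2 \<le> length (y # xs)"
      using 1(2) by (auto simp: Suc_le_eq intro: ccontr)
    then show ?thesis using 1(1) by auto
  qed (auto simp: insert_commute)
qed auto

lemma path_list_ends: "path_list u v p \<Longrightarrow> p ! 0 = u \<and> p ! (length p - 1) = v"
  by (cases p) (auto simp: path_list_def last_conv_nth)

lemma path_list_rev: "path_list u v p \<Longrightarrow> path_list v u (rev p)"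
  by (auto simp: path_list_def hd_rev last_rev)

lemma path_list_second_neq:
  assumes p: "path_list u v p" and q: "path_list u v q"
    and meet: "set p \<inter> set q \<subseteq> {u, v}" and "p \<noteq> q"
  shows "p ! 1 \<noteq> q ! 1"
proof
  assume eq: "p ! 1 = q ! 1"
  have "r = [u, v]" if r: "path_list u v r" "r ! 1 = v" for r
  proof -
    have r_ne: "distinct r" "2 \<le> length r" using r(1) by (auto simp: path_list_def)
    have "r ! 0 = u" "r ! (length r - 1) = v" using path_list_ends[OF r(1)] by auto
    then have "length r = 2"
      using r(2) r_ne distinct_nth_neq[OF r_ne(1), of 1 "length r - 1"] by fastforce
    then show ?thesis
      using \<open>r ! 0 = u\<close> r(2) by (simp add: list_eq_iff_nth_eq less_2_cases_iff)
  qed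
  moreover have "p ! 1 = v"
  proof -
    have "p ! 1 \<in> set p" "q ! 1 \<in> set q" "p ! 0 = u"
      using p q path_list_ends[OF p] by (auto simp: path_list_def)
    moreover have "p ! 1 \<noteq> p ! 0"
      by (rule distinct_nth_neq; use p in \<open>auto simp: path_list_def\<close>)
    ultimately show ?thesis using eq meet by auto
  qed
  ultimately show False using p q eq \<open>p \<noteq> q\<close> by metis
qed

section \<open>The base: a theta graph with a cycle at u\<close>

locale theta_with_cycle =
  fixes u v :: 'a and p1 p2 p3 c :: "'a list" and W :: "'a set" and F :: "'a set set"
  assumes u_neq_v: "u \<noteq> v"
    and paths: "path_list u v p1" "path_list u v p2" "path_list u v p3"
    and paths_neq: "p1 \<noteq> p2" "p1 \<noteq> p3" "p2 \<noteq> p3"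
    and paths_inter: "set p1 \<inter> set p2 = {u, v}" "set p1 \<inter> set p3 = {u, v}"
      "set p2 \<inter> set p3 = {u, v}"
    and cycle: "cycle_list u c"
    and cycle_inter: "set c \<inter> (set p1 \<union> set p2 \<union> set p3) = {u}"
    and W_eq: "W = set p1 \<union> set p2 \<union> set p3 \<union> set c"
    and F_eq: "F = walk_edges p1 \<union> walk_edges p2 \<union> walk_edges p3 \<union> cycle_edges c"
begin

definition paths :: "'a list set" where "paths = {p1, p2, p3}"

lemma in_paths: "p1 \<in> paths" "p2 \<in> paths" "p3 \<in> paths"
  by (simp_all add: paths_def)

lemma path_list_paths: "p \<in> paths \<Longrightarrow> path_list u v p"
  using paths by (auto simp: paths_def)

lemma path_props:
  assumes "p \<in> paths"
  shows "distinct p" "2 \<le> length p" "p ! 0 = u" "p ! (length p - 1) = v" "p \<noteq> []"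
  using path_list_paths[OF assms] path_list_ends[of u v p] by (auto simp: path_list_def)

lemma ends_in_path: "p \<in> paths \<Longrightarrow> u \<in> set p \<and> v \<in> set p"
  using path_props[of p] nth_mem[of 0 p] nth_mem[of "length p - 1" p] by force

lemma paths_meet: "p \<in> paths \<Longrightarrow> q \<in> paths \<Longrightarrow> p \<noteq> q \<Longrightarrow> set p \<inter> set q = {u, v}"
  using paths_inter by (auto simp: paths_def)

lemma cycle_meets_path: "p \<in> paths \<Longrightarrow> set c \<inter> set p = {u}"
  using cycle_inter ends_in_path by (auto simp: paths_def)

lemma cycle_props:
  "distinct c" "3 \<le> length c" "hd c = u" "c ! 0 = u" "last c = c ! (length c - 1)" "c \<noteq> []"
proof -
  show "c \<noteq> []" using cycle by (auto simp: cycle_list_def)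
  with cycle show "distinct c" "3 \<le> length c" "hd c = u" "c ! 0 = u" "last c = c ! (length c - 1)"
    by (auto simp: cycle_list_def hd_conv_nth last_conv_nth)
qed

lemma v_notin_cycle: "v \<notin> set c"
  using cycle_meets_path[OF in_paths(1)] ends_in_path[OF in_paths(1)] u_neq_v by auto

lemma paths_subset_W: "p \<in> paths \<Longrightarrow> set p \<subseteq> W"
  and cycle_subset_W: "set c \<subseteq> W"
  by (auto simp: W_eq paths_def)

lemma cycle_edges_subset_set: "e \<in> cycle_edges c \<Longrightarrow> e \<subseteq> set c"
  using cycle_props(6) walk_edges_subset_set[of e c] by (auto simp: cycle_edges_def)

lemma edge_iff: "e \<in> F \<longleftrightarrow> (\<exists>p\<in>paths. e \<in> walk_edges p) \<or> e \<in> cycle_edges c"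
  by (auto simp: F_eq paths_def)

lemma nbhd_path_interior:
  assumes p: "p \<in> paths" and i: "0 < i" "Suc i < length p"
  shows "nbhd F (p ! i) = {p ! (i - 1), p ! Suc i}" "p ! (i - 1) \<noteq> p ! Suc i"
proof -
  show "p ! (i - 1) \<noteq> p ! Suc i"
    by (rule distinct_nth_neq[OF path_props(1)[OF p]]; use i in linarith)
  have w: "p ! i \<in> set p" using i by simp
  have "p ! i \<noteq> p ! 0" "p ! i \<noteq> p ! (length p - 1)"
    by (rule distinct_nth_neq[OF path_props(1)[OF p]]; use i in linarith)+
  then have "p ! i \<noteq> u" "p ! i \<noteq> v" using path_props[OF p] by simp_all
  then have "p ! i \<notin> set p'" if "p' \<in> paths" "p \<noteq> p'" for p'
    using paths_meet[OF p that] w by blast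
  moreover have "p ! i \<notin> set c"
    using cycle_meets_path[OF p] w \<open>p ! i \<noteq> u\<close> by blast
  ultimately have "{q, p ! i} \<in> F \<longleftrightarrow> {q, p ! i} \<in> walk_edges p" for q
    using edge_iff p walk_edges_subset_set cycle_edges_subset_set by blast
  then show "nbhd F (p ! i) = {p ! (i - 1), p ! Suc i}"
    using in_walk_edges_iff[OF path_props(1)[OF p]] i by (auto simp: nbhd_def)
qed

text \<open>Cycle indices are taken modulo length c: the successor of the last vertex is c ! 0 = u.\<close>
lemma nbhd_cycle_interior:
  assumes i: "0 < i" "i < length c"
  shows "nbhd F (c ! i) = {c ! (i - 1), c ! (Suc i mod length c)}"
    "c ! (i - 1) \<noteq> c ! (Suc i mod length c)"
proof -
  have "Suc i < length c \<or> Suc i = length c" using i by linarith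
  then have next_i: "Suc i mod length c = (if Suc i < length c then Suc i else 0)" by auto
  have "i - 1 \<noteq> Suc i mod length c"
    using next_i i cycle_props(2) by auto
  moreover have "i - 1 < length c" "Suc i mod length c < length c" using i next_i by auto
  ultimately show "c ! (i - 1) \<noteq> c ! (Suc i mod length c)"
    using distinct_nth_neq[OF cycle_props(1)] by blast
  have w: "c ! i \<in> set c" using i by simp
  have "c ! i \<noteq> c ! 0" by (rule distinct_nth_neq[OF cycle_props(1)]; use i in linarith)
  then have "c ! i \<noteq> u" using cycle_props(4) by simp
  then have "c ! i \<notin> set p" if "p \<in> paths" for p
    using cycle_meets_path[OF that] w by blast
  then have "{q, c ! i} \<in> F \<longleftrightarrow> {q, c ! i} \<in> cycle_edges c" for q
    using edge_iff walk_edges_subset_set by blast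
  moreover have "{q, c ! i} = {last c, hd c} \<longleftrightarrow> Suc i = length c \<and> q = u" for q
  proof -
    have "c ! i = c ! (length c - 1) \<longleftrightarrow> Suc i = length c"
      using nth_eq_iff_index_eq[OF cycle_props(1), of i "length c - 1"] i by auto
    then show ?thesis
      using \<open>c ! i \<noteq> u\<close> cycle_props(3,5) by (auto simp: doubleton_eq_iff)
  qed
  ultimately have "{q, c ! i} \<in> F \<longleftrightarrow>
      q = c ! (i - 1) \<or> (Suc i < length c \<and> q = c ! Suc i) \<or> (Suc i = length c \<and> q = u)" for q
    using in_walk_edges_iff[OF cycle_props(1) i(2), of q] i by (auto simp: cycle_edges_def)
  moreover have "c ! (Suc i mod length c) = (if Suc i < length c then c ! Suc i else u)"
    using next_i cycle_props(4) by simp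
  ultimately show "nbhd F (c ! i) = {c ! (i - 1), c ! (Suc i mod length c)}"
    using i by (auto simp: nbhd_def)
qed

lemma cycle_second_and_last:
  "c ! 1 \<in> set c" "last c \<in> set c" "c ! 1 \<noteq> u" "last c \<noteq> u" "c ! 1 \<noteq> last c"
proof -
  show "c ! 1 \<in> set c" "last c \<in> set c" using cycle_props(2,6) by auto
  have "c ! 1 \<noteq> c ! 0" "c ! (length c - 1) \<noteq> c ! 0" "c ! 1 \<noteq> c ! (length c - 1)"
    by (rule distinct_nth_neq[OF cycle_props(1)]; use cycle_props(2) in linarith)+
  then show "c ! 1 \<noteq> u" "last c \<noteq> u" "c ! 1 \<noteq> last c" using cycle_props(4,5) by simp_all
qed

lemma nbhd_u: "nbhd F u = {p1 ! 1, p2 ! 1, p3 ! 1, c ! 1, last c}"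
proof -
  have "{q, u} \<in> walk_edges p \<longleftrightarrow> q = p ! 1" if "p \<in> paths" for p q
    using in_walk_edges_iff[OF path_props(1)[OF that], of 0 q] path_props[OF that] by simp
  moreover have "{q, u} \<in> cycle_edges c \<longleftrightarrow> q = last c \<or> q = c ! 1" for q
  proof -
    have "{q, u} \<in> walk_edges c \<longleftrightarrow> q = c ! 1"
      using in_walk_edges_iff[OF cycle_props(1), of 0 q] cycle_props(2,4,6) by simp
    then show ?thesis
      using cycle_props(3) cycle_second_and_last(4) by (auto simp: cycle_edges_def doubleton_eq_iff)
  qed
  ultimately show ?thesis
    using edge_iff by (auto simp: nbhd_def paths_def)
qed

lemma distinct_nbhd_u: "distinct [p1 ! 1, p2 ! 1, p3 ! 1, c ! 1, last c]"
proof -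
  have paths_second: "p ! 1 \<noteq> q ! 1" if "p \<in> paths" "q \<in> paths" "p \<noteq> q" for p q
    using path_list_second_neq[OF path_list_paths path_list_paths] paths_meet that by blast
  have cycle_second: "p ! 1 \<noteq> x" if "p \<in> paths" "x \<in> set c" "x \<noteq> u" for p x
    using cycle_meets_path[OF that(1)] path_props(2)[OF that(1)] that(2,3) nth_mem[of 1 p] by force
  show ?thesis
    using paths_second[OF in_paths(1,2) paths_neq(1)] paths_second[OF in_paths(1,3) paths_neq(2)]
      paths_second[OF in_paths(2,3) paths_neq(3)] cycle_second[OF in_paths(1)]
      cycle_second[OF in_paths(2)] cycle_second[OF in_paths(3)] cycle_second_and_last
    by simp
qed

lemma nbhd_v:
  "nbhd F v = {p1 ! (length p1 - 2), p2 ! (length p2 - 2), p3 ! (length p3 - 2)}"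
proof -
  have "{q, v} \<in> walk_edges p \<longleftrightarrow> q = p ! (length p - 2)" if "p \<in> paths" for p q
  proof -
    have "length p - 1 < length p" "0 < length p - 1" "\<not> Suc (length p - 1) < length p"
      "length p - 1 - 1 = length p - 2"
      using path_props(2)[OF that] by linarith+
    then show ?thesis
      using in_walk_edges_iff[OF path_props(1)[OF that], of "length p - 1" q] path_props(4)[OF that]
      by simp
  qed
  moreover have "{q, v} \<notin> cycle_edges c" for q
    using cycle_edges_subset_set v_notin_cycle by blast
  ultimately show ?thesis
    using edge_iff by (auto simp: nbhd_def paths_def)
qed

lemma distinct_nbhd_v:
  "distinct [p1 ! (length p1 - 2), p2 ! (length p2 - 2), p3 ! (length p3 - 2)]"
proof -
  have "p ! (length p - 2) \<noteq> q ! (length q - 2)" if "p \<in> paths" "q \<in> paths" "p \<noteq> q" for p q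
  proof -
    have "set (rev p) \<inter> set (rev q) \<subseteq> {v, u}" using paths_meet[OF that] by auto
    then have "rev p ! 1 \<noteq> rev q ! 1"
      using path_list_second_neq[OF path_list_rev[OF path_list_paths] path_list_rev[OF path_list_paths]]
        that by simp
    then show ?thesis using path_props(2)[OF that(1)] path_props(2)[OF that(2)]
      by (simp add: rev_nth numeral_2_eq_2)
  qed
  then show ?thesis using in_paths paths_neq by auto
qed

lemma nbhd_nonempty: "w \<in> W \<Longrightarrow> nbhd F w \<noteq> {}"
proof -
  assume "w \<in> W"
  then consider p where "p \<in> paths" "w \<in> set p" | "w \<in> set c" by (auto simp: W_eq paths_def)
  then have "\<exists>q. {q, w} \<in> F"
  proof cases
    case 1
    then show ?thesis using walk_edges_cover[of w p] path_props(2)[of p] edge_iff by blast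
  next
    case 2
    then show ?thesis
      using walk_edges_cover[of w c] cycle_props(2) by (auto simp: F_eq cycle_edges_def)
  qed
  then show ?thesis by (auto simp: nbhd_def)
qed

lemma theta_with_cycle_reversed: "theta_with_cycle u v p1 p2 p3 (u # rev (tl c)) W F"
proof -
  obtain cs where c: "c = u # cs" using cycle_props(3,6) by (cases c) auto
  then have cs: "cs \<noteq> []" using cycle_props(2) by auto
  have "cycle_edges (u # rev cs) = insert {hd cs, u} (insert {u, last cs} (walk_edges cs))"
    using cs walk_edges_rev[of cs]
    by (simp add: cycle_edges_def walk_edges_Cons hd_rev last_rev)
  also have "\<dots> = cycle_edges c"
    using cs by (simp add: c cycle_edges_def walk_edges_Cons insert_commute)
  finally have "cycle_edges (u # rev (tl c)) = cycle_edges c" using c by simp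
  moreover have "cycle_list u (u # rev (tl c))" "set (u # rev (tl c)) = set c"
    using cycle by (auto simp: c cycle_list_def)
  ultimately show ?thesis
    using u_neq_v paths paths_neq paths_inter cycle_inter W_eq F_eq by unfold_locales simp_all
qed

end

section \<open>Pendant vertices in G_{a,b}\<close>

lemma sum_eq_card_imp_all_one:
  fixes f :: "'b \<Rightarrow> int"
  assumes "finite A" "\<And>q. q \<in> A \<Longrightarrow> 1 \<le> f q" "sum f A = int (card A)" "q \<in> A"
  shows "f q = 1"
proof -
  have "(\<Sum>q\<in>A. f q - 1) = 0" using assms(3) by (simp add: sum_subtractf)
  moreover have "\<forall>q\<in>A. 0 \<le> f q - 1" using assms(2) by fastforce
  ultimately have "\<forall>q\<in>A. f q - 1 = 0"
    using sum_nonneg_eq_0_iff[OF assms(1), of "\<lambda>q. f q - 1"] by blast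
  then show ?thesis using assms(4) by simp
qed

text \<open>The degree equations at adjacent vertices y and z, where y has degree k \<ge> 2 and all its
  other neighbours are pendant (so k = a + b - 1), and r is the degree sum over the other
  neighbours of z.\<close>
lemma double_star_arith:
  fixes a b k d r :: int
  assumes "2 \<le> k" "k = a + b - 1" "(k - 1) + d = a * k + b - k ^ 2"
    and "k + r = a * d + b - d ^ 2" "d - 1 \<le> r" "1 \<le> d"
  shows "r = d - 1"
proof -
  define s where "s = a - k - 1"
  have b: "b = k + 1 - a" using assms(2) by simp
  have d: "d - 1 = (k - 1) * s" using assms(3) unfolding b s_def power2_eq_square by algebra
  have r: "r = (d - 1) * (a - d - 1)" using assms(4) unfolding b power2_eq_square by algebra
  show ?thesis
  proof (cases "d = 1")
    case False
    then have "0 < d - 1" using assms(6) by simp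
    moreover have "(d - 1) * 1 \<le> (d - 1) * (a - d - 1)" using assms(5) r by simp
    ultimately have "1 \<le> a - d - 1" by (simp add: mult_le_cancel_left)
    have "1 \<le> s"
    proof (rule ccontr)
      assume "\<not> 1 \<le> s"
      then have "(k - 1) * s \<le> 0" using assms(1) by (simp add: mult_nonneg_nonpos)
      with d \<open>0 < d - 1\<close> show False by simp
    qed
    have "0 \<le> (k - 2) * (s - 1)" using assms(1) \<open>1 \<le> s\<close> by simp
    moreover have "(k - 2) * (s - 1) \<le> 0"
      using \<open>1 \<le> a - d - 1\<close> d unfolding s_def by (simp add: algebra_simps)
    ultimately have "k = 2 \<or> s = 1" by simp
    then show ?thesis using d r unfolding s_def by auto
  qed (use r in simp)
qed

locale gab_graph =
  fixes V :: "'a set" and E :: "'a set set" and a b :: int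
  assumes simple: "simple_graph V E" and connected: "connected_graph V E"
    and degree_eq: "\<And>w. w \<in> V \<Longrightarrow>
      (\<Sum>q\<in>nbhd E w. int (deg E q)) = a * int (deg E w) + b - int (deg E w) ^ 2"
begin

abbreviation d :: "'a \<Rightarrow> int" where "d w \<equiv> int (deg E w)"

definition K :: int where "K = a + b - 1"

lemma deg_nbhd_pendant: "pendant V E x \<Longrightarrow> y \<in> nbhd E x \<Longrightarrow> d y = K"
  using degree_eq[of x] nbhd_eq_singleton_if_deg_1[of E x y] by (simp add: pendant_def K_def)

lemma deg_pos: "q \<in> nbhd E w \<Longrightarrow> 1 \<le> d q"
  using deg_pos_if_nbhd[OF simple] by fastforce

lemma pendant_iff: "q \<in> nbhd E w \<Longrightarrow> pendant V E q \<longleftrightarrow> d q = 1"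
  using nbhd_subset[OF simple] by (auto simp: pendant_def)

lemma pendant_beyond_double_star:
  assumes y: "y \<in> V" "\<not> pendant V E y" and z: "z \<in> nbhd E y"
    and leaves: "\<And>q. q \<in> nbhd E y - {z} \<Longrightarrow> pendant V E q"
    and q: "q \<in> nbhd E z - {y}"
  shows "pendant V E q"
proof -
  let ?L = "nbhd E y - {z}" and ?R = "nbhd E z - {y}"
  have fin: "finite (nbhd E y)" "finite (nbhd E z)" using finite_nbhd[OF simple] by auto
  have yz: "y \<in> nbhd E z" using z nbhd_commute by metis
  have "?L \<noteq> {}"
  proof
    assume "?L = {}"
    then have "nbhd E y = {z}" using z by blast
    then show False using y by (simp add: pendant_def deg_def)
  qed
  then obtain x where x: "x \<in> ?L" by blast
  have dy: "d y = K" using deg_nbhd_pendant[OF leaves[OF x]] x nbhd_commute[of x E y] by simp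
  have card_L: "d y = int (card ?L) + 1"
    using card_Suc_Diff1[OF fin(1) z] by (simp add: deg_def)
  moreover have "0 < card ?L" using \<open>?L \<noteq> {}\<close> fin(1) card_gt_0_iff by blast
  ultimately have "2 \<le> d y" by simp
  have "d q = 1" if "q \<in> ?L" for q using leaves[OF that] pendant_iff[of q y] that by simp
  then have "(\<Sum>q\<in>?L. d q) = int (card ?L)" by simp
  then have "(d y - 1) + d z = a * d y + b - (d y) ^ 2"
    using degree_eq[OF y(1)] sum.remove[OF fin(1) z, of d] card_L by simp
  moreover have "d y + (\<Sum>q\<in>?R. d q) = a * d z + b - (d z) ^ 2"
    using degree_eq[of z] sum.remove[OF fin(2) yz, of d] z nbhd_subset[OF simple, of y] by auto
  moreover have "d z = int (card ?R) + 1"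
    using card_Suc_Diff1[OF fin(2) yz] by (simp add: deg_def)
  moreover have "int (card ?R) \<le> (\<Sum>q\<in>?R. d q)"
    using sum_mono[of ?R "\<lambda>_. 1" d] deg_pos[of _ z] by simp
  ultimately have "(\<Sum>q\<in>?R. d q) = int (card ?R)"
    using double_star_arith[OF \<open>2 \<le> d y\<close>, of a b "d z" "\<Sum>q\<in>?R. d q"] dy by (simp add: K_def)
  then have "d q = 1"
    using sum_eq_card_imp_all_one[of ?R d] fin(2) deg_pos[of _ z] q by simp
  then show ?thesis using pendant_iff[of q z] q by simp
qed

lemma card_non_pendant_le:
  assumes "C \<subseteq> V" "C \<noteq> {}" "\<forall>y\<in>C. \<forall>q\<in>nbhd E y - C. pendant V E q"
  shows "card {w \<in> V. \<not> pendant V E w} \<le> card C"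
proof (rule card_mono)
  show "finite C" using assms(1) simple finite_subset by (auto simp: simple_graph_def)
  show "{w \<in> V. \<not> pendant V E w} \<subseteq> C"
    using non_pendant_in_core[OF simple connected assms] by auto
qed

text \<open>This is what makes pruning remove exactly the pendant vertices: the non-pendant vertices
  form a set that is never pruned.\<close>
lemma two_non_pendant_neighbours:
  assumes three: "3 \<le> card {w \<in> V. \<not> pendant V E w}" and y: "y \<in> V" "\<not> pendant V E y"
  shows "2 \<le> card {q \<in> nbhd E y. \<not> pendant V E q}"
proof (rule ccontr)
  let ?N = "{q \<in> nbhd E y. \<not> pendant V E q}"
  assume "\<not> 2 \<le> card ?N"
  moreover have "finite ?N" using finite_nbhd[OF simple] by simp
  ultimately consider "?N = {}" | z where "?N = {z}"
    by (metis One_nat_def card_1_singletonE card_eq_0_iff less_2_cases_iff not_le)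
  then show False
  proof cases
    case 1
    then have "card {w \<in> V. \<not> pendant V E w} \<le> card {y}"
      using y by (intro card_non_pendant_le) auto
    with three show False by simp
  next
    case (2 z)
    then have z: "z \<in> nbhd E y" and leaves: "\<And>q. q \<in> nbhd E y - {z} \<Longrightarrow> pendant V E q"
      by auto
    have "card {w \<in> V. \<not> pendant V E w} \<le> card {y, z}"
    proof (rule card_non_pendant_le)
      show "{y, z} \<subseteq> V" using y z nbhd_subset[OF simple] by auto
      show "\<forall>y'\<in>{y, z}. \<forall>q\<in>nbhd E y' - {y, z}. pendant V E q"
        using leaves pendant_beyond_double_star[OF y z leaves] by auto
    qed simp
    moreover have "card {y, z} \<le> 2" by (cases "y = z") auto
    ultimately show False using three by simp
  qed
qed

end

section \<open>Graphs in G_{a,b} with this base\<close>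

locale gab_theta = gab_graph V E a b + theta_with_cycle u v p1 p2 p3 c W F
  for V :: "'a set" and E a b and u v :: 'a and p1 p2 p3 c W F +
  assumes base: "is_base (V, E) (W, F)" and has_pendant: "\<exists>x. pendant V E x"
begin

text \<open>With a = K + 1 + t and b = -t the degree equations of base vertices become linear in K.\<close>
definition t :: int where "t = - b"

abbreviation nbr_sum :: "'a \<Rightarrow> int" where "nbr_sum w \<equiv> \<Sum>q\<in>nbhd F w. d q"

lemma W_subset: "W \<subseteq> V" and F_induced: "F = {e \<in> E. e \<subseteq> W}"
  using prune_steps_induced[OF _ simple, of "(W, F)"] base by (auto simp: is_base_def)

lemma nbhd_F_subset: "nbhd F w \<subseteq> nbhd E w"
  by (rule nbhd_mono) (auto simp: F_induced)

lemma nbhd_F_eq: "w \<in> W \<Longrightarrow> nbhd F w = nbhd E w \<inter> W"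
  by (auto simp: nbhd_def F_induced)

lemma finite_nbhd_F: "finite (nbhd F w)"
  using finite_nbhd[OF simple] nbhd_F_subset by (rule finite_subset[rotated])

lemma deg_F_ge_2: "w \<in> W \<Longrightarrow> 2 \<le> deg F w"
proof -
  assume w: "w \<in> W"
  have "deg F w \<noteq> 1" using w base by (auto simp: is_base_def pendant_def)
  moreover have "deg F w \<noteq> 0" using nbhd_nonempty[OF w] finite_nbhd_F by (simp add: deg_def)
  ultimately show ?thesis by linarith
qed

lemma deg_F_le: "deg F w \<le> deg E w"
  unfolding deg_def using finite_nbhd[OF simple] nbhd_F_subset by (rule card_mono)

lemma deg_ge_2: "w \<in> W \<Longrightarrow> 2 \<le> d w"
  using deg_F_ge_2 deg_F_le by (metis le_trans of_nat_le_iff of_nat_numeral)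

lemma base_non_pendant: "w \<in> W \<Longrightarrow> \<not> pendant V E w"
  using deg_ge_2 by (fastforce simp: pendant_def)

lemma u_in_W: "u \<in> W"
  using cycle_props(3,6) hd_in_set[of c] cycle_subset_W by blast

lemma v_in_W: "v \<in> W"
  using ends_in_path[OF in_paths(1)] paths_subset_W[OF in_paths(1)] by blast

lemma three_non_pendant: "3 \<le> card {w \<in> V. \<not> pendant V E w}"
proof -
  have "{u, c ! 1, last c} \<subseteq> W" using u_in_W cycle_second_and_last(1,2) cycle_subset_W by auto
  then have "{u, c ! 1, last c} \<subseteq> {w \<in> V. \<not> pendant V E w}"
    using W_subset base_non_pendant by blast
  moreover have "finite {w \<in> V. \<not> pendant V E w}" using simple by (simp add: simple_graph_def)
  ultimately have "card {u, c ! 1, last c} \<le> card {w \<in> V. \<not> pendant V E w}"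
    by (rule card_mono[rotated])
  moreover have "card {u, c ! 1, last c} = 3"
    using cycle_second_and_last(3,4,5) by simp
  ultimately show ?thesis by simp
qed

lemma outside_base_pendant: "w \<in> V \<Longrightarrow> w \<notin> W \<Longrightarrow> pendant V E w"
proof -
  let ?X = "{w \<in> V. \<not> pendant V E w}"
  have "?X \<subseteq> W"
  proof (rule prune_steps_keep[of V E "(W, F)", simplified])
    show "prune_step\<^sup>*\<^sup>* (V, E) (W, F)" using base by (simp add: is_base_def)
    show "2 \<le> card (nbhd E x \<inter> ?X)" if "x \<in> ?X" for x
    proof -
      have "nbhd E x \<inter> ?X = {q \<in> nbhd E x. \<not> pendant V E q}"
        using nbhd_subset[OF simple] by auto
      then show ?thesis using two_non_pendant_neighbours[OF three_non_pendant] that by simp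
    qed
  qed (use simple in auto)
  then show "w \<in> V \<Longrightarrow> w \<notin> W \<Longrightarrow> pendant V E w" by blast
qed

text \<open>A base vertex either carries no pendant vertices, or it carries some and then has degree K.\<close>
lemma base_vertex_cases:
  assumes w: "w \<in> W"
  defines "f \<equiv> int (deg F w)"
  shows "(d w = f \<and> nbr_sum w = a * f + b - f ^ 2) \<or>
    (d w = K \<and> f < K \<and> nbr_sum w = t * (K - 1) + f)"
proof -
  let ?L = "nbhd E w - W"
  have split: "nbhd E w = nbhd F w \<union> ?L" "nbhd F w \<inter> ?L = {}"
    using nbhd_F_eq[OF w] by auto
  have fin: "finite ?L" using finite_nbhd[OF simple] by simp
  have leaves: "pendant V E q" if "q \<in> ?L" for q
    using that outside_base_pendant nbhd_subset[OF simple] by blast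
  then have "d q = 1" if "q \<in> ?L" for q using that pendant_iff by blast
  then have sum_L: "(\<Sum>q\<in>?L. d q) = int (card ?L)" by simp
  have deg_w: "d w = f + int (card ?L)"
    unfolding f_def deg_def using card_Un_disjoint[OF finite_nbhd_F fin split(2)] split(1) by simp
  have eq_w: "nbr_sum w + int (card ?L) = a * d w + b - (d w) ^ 2"
    using degree_eq[of w] w W_subset sum.union_disjoint[OF finite_nbhd_F fin split(2)] split(1) sum_L
    by (metis subsetD)
  show ?thesis
  proof (cases "?L = {}")
    case False
    then obtain x where x: "x \<in> ?L" by blast
    then have "w \<in> nbhd E x" using nbhd_commute[of x E w] by simp
    then have "d w = K" using deg_nbhd_pendant[OF leaves[OF x]] by simp
    moreover have "0 < card ?L" using False fin by auto
    ultimately have "f < K" "nbr_sum w = a * K + b - K ^ 2 - (K - f)"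
      using deg_w eq_w by simp_all
    moreover have "a * K + b - K ^ 2 - (K - f) = t * (K - 1) + f"
      by (simp add: K_def t_def power2_eq_square algebra_simps)
    ultimately show ?thesis using \<open>d w = K\<close> by simp
  next
    case True
    then have "card ?L = 0" by (simp only: card.empty)
    with deg_w eq_w show ?thesis by simp
  qed
qed

lemma K_t_bounds: "3 \<le> K" "1 \<le> t"
proof -
  obtain x where x: "pendant V E x" using has_pendant by blast
  then obtain y where y: "nbhd E x = {y}" by (auto simp: pendant_def deg_def card_1_singleton_iff)
  then have y_V: "y \<in> V" using nbhd_subset[OF simple] by blast
  have "\<not> pendant V E y"
  proof
    assume "pendant V E y"
    then have leaves: "\<forall>x'\<in>{x}. \<forall>q\<in>nbhd E x' - {x}. pendant V E q" using y by simp
    have "{x} \<subseteq> V" using x by (simp add: pendant_def)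
    moreover have "u \<in> V" "\<not> pendant V E u" using u_in_W W_subset base_non_pendant by auto
    ultimately have "u \<in> {x}"
      using non_pendant_in_core[OF simple connected _ _ leaves] by blast
    then show False using x \<open>\<not> pendant V E u\<close> by simp
  qed
  then have y_W: "y \<in> W" using outside_base_pendant y_V by blast
  have "x \<notin> W" using x base_non_pendant by blast
  moreover have "x \<in> nbhd E y" using y nbhd_commute[of y E x] by simp
  ultimately have "nbhd F y \<subset> nbhd E y" using nbhd_F_eq[OF y_W] by blast
  then have "deg F y < deg E y"
    unfolding deg_def using finite_nbhd[OF simple] by (rule psubset_card_mono[rotated])
  moreover have "2 * int (deg F y) \<le> nbr_sum y"
  proof -
    have "(\<Sum>q\<in>nbhd F y. 2) \<le> nbr_sum y"
      using deg_ge_2 nbhd_F_eq[OF y_W] by (intro sum_mono) auto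
    then show ?thesis by (simp add: deg_def)
  qed
  moreover have "2 \<le> deg F y" using deg_F_ge_2[OF y_W] .
  ultimately have "2 < K" "2 \<le> t * (K - 1)"
    using base_vertex_cases[OF y_W] by auto
  show "3 \<le> K" using \<open>2 < K\<close> by simp
  show "1 \<le> t"
  proof (rule ccontr)
    assume "\<not> 1 \<le> t"
    then have "t * (K - 1) \<le> 0" using \<open>2 < K\<close> by (simp add: mult_nonpos_nonneg)
    with \<open>2 \<le> t * (K - 1)\<close> show False by simp
  qed
qed

lemma base_degree_2_cases:
  assumes "w \<in> W" "nbhd F w = {x, y}" "x \<noteq> y"
  shows "(d w = 2 \<and> d x + d y = 2 * K + t - 2) \<or> (d w = K \<and> d x + d y = t * (K - 1) + 2)"
proof -
  have "int (deg F w) = 2" "nbr_sum w = d x + d y" using assms(2,3) by (simp_all add: deg_def)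
  then show ?thesis
    using base_vertex_cases[OF assms(1)] by (auto simp: K_def t_def)
qed

lemma path_interior_cases:
  assumes "p \<in> paths" "0 < i" "Suc i < length p"
  shows "(d (p ! i) = 2 \<and> d (p ! (i - 1)) + d (p ! Suc i) = 2 * K + t - 2) \<or>
    (d (p ! i) = K \<and> d (p ! (i - 1)) + d (p ! Suc i) = t * (K - 1) + 2)"
  using assms paths_subset_W[OF assms(1)] nth_mem[of i p]
  by (intro base_degree_2_cases nbhd_path_interior) auto

lemma cycle_interior_cases:
  assumes "0 < i" "i < length c"
  shows "(d (c ! i) = 2 \<and> d (c ! (i - 1)) + d (c ! (Suc i mod length c)) = 2 * K + t - 2) \<or>
    (d (c ! i) = K \<and> d (c ! (i - 1)) + d (c ! (Suc i mod length c)) = t * (K - 1) + 2)"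
  using assms cycle_subset_W by (intro base_degree_2_cases nbhd_cycle_interior) auto

lemma u_degree_cases:
  "(d u = 5 \<and> d (p1 ! 1) + d (p2 ! 1) + d (p3 ! 1) + d (c ! 1) + d (last c) = 5 * K + 4 * t - 20) \<or>
   (d u = K \<and> 5 < K \<and> d (p1 ! 1) + d (p2 ! 1) + d (p3 ! 1) + d (c ! 1) + d (last c) = t * (K - 1) + 5)"
proof -
  have "int (deg F u) = 5" "nbr_sum u = d (p1 ! 1) + d (p2 ! 1) + d (p3 ! 1) + d (c ! 1) + d (last c)"
    using distinct_nbhd_u by (simp_all add: nbhd_u deg_def algebra_simps)
  then show ?thesis
    using base_vertex_cases[OF u_in_W] by (auto simp: K_def t_def)
qed

lemma u_nbhd_deg_ge_2: "2 \<le> d (p1 ! 1)" "2 \<le> d (p2 ! 1)" "2 \<le> d (p3 ! 1)" "2 \<le> d (last c)"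
  using nbhd_u nbhd_F_eq[OF u_in_W] deg_ge_2 by auto

end

text \<open>In the next two lemmas du, d1, d2, dz are the degrees of u, c ! 1, c ! 2 and of the vertex
  after c ! 2, which is u itself exactly when the cycle is a triangle (the proposition P).\<close>
lemma mixed_cycle_arith:
  fixes K t du dz :: int
  assumes K: "3 \<le> K" and t: "1 \<le> t"
    and d: "(du = K + t - 2 \<and> dz = (K - 1) * t) \<or> (du = (K - 1) * t \<and> dz = K + t - 2)"
    and u: "du = 5 \<or> (du = K \<and> 5 < K)"
    and z: "(dz = du \<and> P) \<or> dz = 2 \<or> dz = K"
  shows "P \<and> t = 1 \<and> K = 6 \<and> du = 5"
proof (cases "t = 1")
  case True
  then show ?thesis using assms by auto
next
  case False
  define X where "X = (K - 1) * t"
  have "(K - 1) * 2 \<le> X"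
    using False K t mult_left_mono[of 2 t "K - 1"] unfolding X_def by simp
  moreover have "1 \<le> X - K - t + 2"
  proof -
    have "1 \<le> (K - 2) * (t - 1)" using False K t mult_mono[of 1 "K - 2" 1 "t - 1"] by simp
    then show ?thesis unfolding X_def by (simp add: algebra_simps)
  qed
  ultimately have bounds: "2 * K - 2 \<le> X" "K + t - 1 \<le> X" by simp_all
  from d consider (A) "du = K + t - 2" "dz = X" | (B) "du = X" "dz = K + t - 2"
    unfolding X_def by blast
  then have False
  proof cases
    case A
    with z bounds K show False by (elim disjE conjE) linarith+
  next
    case B
    have "t = 2" using z B bounds K t False by (elim disjE conjE) linarith+
    then have "du = 2 * K - 2" using B unfolding X_def by (simp add: algebra_simps)
    with u K show False by presburger
  qed
  then show ?thesis ..
qed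

lemma equal_cycle_arith:
  fixes K t du :: int
  assumes K: "3 \<le> K" and t: "1 \<le> t" and d: "du + K = t * K - t + 2"
    and u: "(du = 5 \<and> 7 \<le> K + t) \<or> (du = K \<and> 5 < K)"
  shows "t = 2 \<and> du = K"
proof -
  define X where "X = (K - 1) * t"
  have eq: "du + K = X + 2" using d unfolding X_def by (simp add: algebra_simps)
  have "t = 1 \<or> t = 2 \<or> t = 3 \<or> 4 \<le> t" using t by linarith
  then have "(t = 1 \<and> X = K - 1) \<or> (t = 2 \<and> X = 2 * K - 2) \<or> (t = 3 \<and> X = 3 * K - 3) \<or>
      (4 \<le> t \<and> (K - 1) * 4 \<le> X)"
    using K mult_left_mono[of 4 t "K - 1"] unfolding X_def by auto
  then show ?thesis using K u eq by (elim disjE conjE) (simp | linarith)+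
qed

context gab_theta
begin

text \<open>The degree equations at c ! 1, c ! 2 and the vertex after c ! 2, together with the one at u,
  leave only these two possibilities.\<close>
lemma cycle_start_cases:
  "(t = 2 \<and> d u = K \<and> d (c ! 1) = K) \<or>
   (length c = 3 \<and> K = 6 \<and> t = 1 \<and> d u = 5 \<and> d (c ! 1) + d (c ! 2) = 8)"
proof -
  have L: "3 \<le> length c" by (rule cycle_props(2))
  have c1: "(d (c ! 1) = 2 \<and> d u + d (c ! 2) = 2 * K + t - 2) \<or>
      (d (c ! 1) = K \<and> d u + d (c ! 2) = t * (K - 1) + 2)"
    using cycle_interior_cases[of 1] L cycle_props(4) by (simp add: numeral_2_eq_2)
  define z where "z = c ! (3 mod length c)"
  have c2: "(d (c ! 2) = 2 \<and> d (c ! 1) + d z = 2 * K + t - 2) \<or>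
      (d (c ! 2) = K \<and> d (c ! 1) + d z = t * (K - 1) + 2)"
    using cycle_interior_cases[of 2] L unfolding z_def by (simp add: numeral_3_eq_3)
  have z: "(d z = d u \<and> length c = 3) \<or> d z = 2 \<or> d z = K"
  proof (cases "length c = 3")
    case True
    then show ?thesis using cycle_props(4) by (simp add: z_def)
  next
    case False
    then show ?thesis using cycle_interior_cases[of 3] L unfolding z_def by auto
  qed
  have u: "d u = 5 \<or> (d u = K \<and> 5 < K)" "d u = 5 \<longrightarrow> d (c ! 1) + 8 \<le> 5 * K + 4 * t - 20"
    using u_degree_cases u_nbhd_deg_ge_2 by auto
  have Kt: "3 \<le> K" "1 \<le> t" by (rule K_t_bounds)+
  from c1 c2 Kt consider
      "d (c ! 1) = 2" "d (c ! 2) = 2" "d u = 2 * K + t - 4" "d z = d u"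
    | "d (c ! 1) = K" "d (c ! 2) = K" "d u + K = t * K - t + 2"
    | "d (c ! 1) = 2" "d (c ! 2) = K" "d u = K + t - 2" "d z = (K - 1) * t"
    | "d (c ! 1) = K" "d (c ! 2) = 2" "d u = (K - 1) * t" "d z = K + t - 2"
    by (auto simp: algebra_simps)
  then show ?thesis
  proof cases
    case 1
    with u Kt show ?thesis by linarith
  next
    case 2
    then have "(d u = 5 \<and> 7 \<le> K + t) \<or> (d u = K \<and> 5 < K)" using u by auto
    then show ?thesis using equal_cycle_arith[OF Kt 2(3)] 2 by simp
  next
    case 3
    then show ?thesis using mixed_cycle_arith[OF Kt, of "d u" "d z"] u z by auto
  next
    case 4
    then show ?thesis using mixed_cycle_arith[OF Kt, of "d u" "d z"] u z by auto
  qed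
qed

lemma deg_F_v: "deg F v = 3"
  using distinct_nbhd_v by (simp add: nbhd_v deg_def)

lemma v_degree_cases:
  "(d v = 3 \<and> nbr_sum v = 3 * K + 2 * t - 6) \<or> (d v = K \<and> 3 < K \<and> nbr_sum v = t * (K - 1) + 3)"
  using base_vertex_cases[OF v_in_W] deg_F_v by (auto simp: K_def t_def)

lemma short_path_if_light_start:
  assumes Kt: "K = 6" "t = 1" and du: "d u = 5" and p: "p \<in> paths" and d1: "d (p ! 1) = 2"
  shows "length p = 3 \<and> d v = 6"
proof -
  have ends: "p ! 0 = u" "p ! (length p - 1) = v" "2 \<le> length p" using path_props[OF p] by auto
  have "3 \<le> d v" using deg_F_v deg_F_le[of v] by linarith
  then have "length p \<noteq> 2" using ends d1 by auto
  then have "3 \<le> length p" using ends by linarith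
  then have d2: "d (p ! 2) = 6"
    using path_interior_cases[OF p, of 1] ends(1) Kt du d1 by (auto simp: numeral_2_eq_2)
  show ?thesis
  proof (cases "length p = 3")
    case True
    then show ?thesis using ends d2 by simp
  next
    case False
    then have "4 \<le> length p" using \<open>3 \<le> length p\<close> by linarith
    then have d3: "d (p ! 3) = 5"
      using path_interior_cases[OF p, of 2] Kt d1 d2 by (auto simp: numeral_3_eq_3)
    show ?thesis
    proof (cases "length p = 4")
      case True
      then show ?thesis using ends d3 v_degree_cases Kt by auto
    next
      case False
      then have "Suc 3 < length p" using \<open>4 \<le> length p\<close> by linarith
      then show ?thesis using path_interior_cases[OF p, of 3] Kt d3 by auto
    qed
  qed
qed

lemma gab_theta_reversed: "gab_theta V E a b u v p1 p2 p3 (u # rev (tl c)) W F"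
  by (intro gab_theta.intro gab_graph_axioms theta_with_cycle_reversed)
    (simp add: gab_theta_axioms_def base has_pendant)

lemma nth_1_reversed_cycle: "(u # rev (tl c)) ! 1 = last c"
proof -
  obtain x xs where c: "c = x # xs" using cycle_props(6) by (cases c) auto
  then have "xs \<noteq> []" using cycle_props(2) by auto
  then show ?thesis using c by (simp add: hd_conv_nth[symmetric] hd_rev)
qed

theorem inconsistent: False
  using cycle_start_cases
proof
  assume c1: "t = 2 \<and> d u = K \<and> d (c ! 1) = K"
  then have "d (last c) = K"
    using gab_theta.cycle_start_cases[OF gab_theta_reversed] nth_1_reversed_cycle by auto
  then show False using c1 u_degree_cases u_nbhd_deg_ge_2 by auto
next
  assume c3: "length c = 3 \<and> K = 6 \<and> t = 1 \<and> d u = 5 \<and> d (c ! 1) + d (c ! 2) = 8"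
  then have "last c = c ! 2" using cycle_props(5) by simp
  then have "d (p1 ! 1) = 2" "d (p2 ! 1) = 2" "d (p3 ! 1) = 2"
    using c3 u_degree_cases u_nbhd_deg_ge_2 by auto
  then have "length p1 = 3" "length p2 = 3" "length p3 = 3" "d v = 6"
    using short_path_if_light_start c3 in_paths by blast+
  then have "nbr_sum v = 6"
    using distinct_nbhd_v \<open>d (p1 ! 1) = 2\<close> \<open>d (p2 ! 1) = 2\<close> \<open>d (p3 ! 1) = 2\<close>
    by (simp add: nbhd_v)
  then show False using v_degree_cases c3 \<open>d v = 6\<close> by auto
qed

end

theorem proposition3:
  fixes V :: "'a set" and E :: "'a set set" and W :: "'a set" and F :: "'a set set"
  assumes "tricyclic V E"
    and "\<exists>x. pendant V E x"
    and "is_base (V, E) (W, F)"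
    and "theta_with_cycle_at_u W F"
  shows "\<forall>a b :: int. \<not> in_Gab V E a b"
proof (intro allI notI)
  fix a b :: int
  assume "in_Gab V E a b"
  then have "gab_graph V E a b" by (simp add: in_Gab_def gab_graph_def)
  moreover obtain u v p1 p2 p3 c where "theta_with_cycle u v p1 p2 p3 c W F"
    using assms(4) unfolding theta_with_cycle_at_u_def theta_with_cycle_def by blast
  ultimately have "gab_theta V E a b u v p1 p2 p3 c W F"
    using assms(2,3) by (simp add: gab_theta_def gab_theta_axioms_def)
  then show False by (rule gab_theta.inconsistent)
qed

end
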